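(* In the setting described in the context, let $M(f,g)=E\big(\langle f,T_{s(Y)}g\rangle^2_{\mathcal H_U}\big)$. The minimization defining the CP-sequence of $s(Y)$ is equivalent to the following sequence of maximization problems: Step 1: maximize $M(f,g)$ subject to $\|f\|_{\mathcal H_U}=1$ and $\|g\|_{\mathcal H_V}=1$; Step $k$ ($k=2,\ldots,d$): maximize $M(f,g)$ subject to $\|f\|_{\mathcal H_U}=1$, $\langle f,f_i\rangle_{\mathcal H_U}=0$ for $i=1,\ldots,k-1$, $\|g\|_{\mathcal H_V}=1$, $\langle g,g_i\rangle_{\mathcal H_V}=0$ for $i=1,\ldots,k-1$, where $(f_i,g_i)$, $i=1,\ldots,k-1$, are the solutions obtained in Steps $1$ through $k-1$.
   Context: Let $(\Omega,\mathcal F,P)$ be a probability space, $X:\Omega\to\mathbb R^{p\times q}$ a random matrix, $Y$ a random element of a measurable space $\Omega_Y$ with distribution $P_Y$, $r=\min(p,q)$. Assume with probability one: $\operatorname{rank}X=r$; the first components of the left and right singular vectors of $X$ are nonzero; the nonzero singular values of $X$ are simple. For $x\in\mathbb R^{p\times q}$ write $x=\sum_{i=1}^r\lambda_i(x)U_i^0(x)V_i^0(x)^\top$ (SVD, $\lambda_i(x)>0$, first component of $U_i^0(x)$ positive) and set $U_i(x)=\lambda_i(x)^{1/2}U_i^0(x)$, $V_i(x)=\lambda_i(x)^{1/2}V_i^0(x)$. Let $\kappa_U,\kappa_V,\kappa_Y$ be positive definite kernels on $\mathbb R^p,\mathbb R^q,\Omega_Y$; $\mathcal H_U,\mathcal H_V,\mathcal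 H_Y$ are the subspaces of their RKHSs spanned by centered kernel functions $\kappa_U(\cdot,u)-E\kappa_U(\cdot,U)$, $\kappa_V(\cdot,v)-E\kappa_V(\cdot,V)$, $\kappa_Y(\cdot,y)-E\kappa_Y(\cdot,Y)$ (Bochner means). $\mathcal H_U\otimes\mathcal H_V$ is the completion of $\operatorname{span}\{fg\}$, $fg(u,v)=f(u)g(v)$, with $\langle f_1g_1,f_2g_2\rangle_\otimes=\langle f_1,f_2\rangle_{\mathcal H_U}\langle g_1,g_2\rangle_{\mathcal H_V}$. Feature map $F(X)=\sum_{i=1}^r[\kappa_U(\cdot,U_i(X))-E\kappa_U(\cdot,U_i(X))][\kappa_V(\cdot,V_i(X))-E\kappa_V(\cdot,V_i(X))]$. For Hilbert spaces, $h_1\otimes h_2$ is the operator $g\mapsto h_1\langle h_2,g\rangle$. Assume $E\|F(X)\|_\otimes^2<\infty$, $E[\kappa_Y(Y,Y)]<\infty$; $\Sigma_{FF}=E[F(X)\otimes F(X)]-E[F(X)]\otimes E[F(X)]$, $\Sigma_{FY}=E[F(X)\otimes(\kappa_Y(\cdot,Y)-E\kappa_Y(\cdot,Y))]$; assume $\operatorname{ran}(\Sigma_{FY})\subseteq\operatorname{ran}(\Sigma_{FF})$; $R_{FY}=\Sigma_{FF}^\dagger\Sigma_{FY}$ where $A^\dagger$ is the inverse of $A|\overline{\operatorname{ran}}(A)$ onto $\operatorname{ran}(A)$; $s(Y)=R_{FY}[\kappa_Y(\cdot,Y)-E\kappa_Y(\cdot,Y)]$. For $\rho\in\mathcal H_U\otimes\mathcal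 H_V$, $T_\rho:\mathcal H_V\to\mathcal H_U$ is the unique bounded linear operator with $\langle f,T_\rho g\rangle_{\mathcal H_U}=\langle fg,\rho\rangle_\otimes$. Define $L(f,g)=\min_{u\in L_2(P_Y)}E\|s(Y)-u(Y)fg\|_\otimes^2$. The CP-sequence of $s(Y)$ is defined recursively: $(f_1,g_1)$ minimizes $L$ over $\mathcal H_U\times\mathcal H_V$; for $k\ge2$, $(f_k,g_k)$ minimizes $L$ over $(\operatorname{span}\{f_1,\ldots,f_{k-1}\})^\perp\times(\operatorname{span}\{g_1,\ldots,g_{k-1}\})^\perp$. Here $d$ denotes the number of steps of the CP-sequence considered, namely $d=\min\{k: L(f_\ell,g_\ell)=0\text{ for all }\ell\ge k\}$. *)

theory Defs
  imports "HOL-Probability.Probability"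
begin

text \<open>Abstract Hilbert tensor product: tp f g plays the role of the elementary
tensor fg in H_U (x) H_V.\<close>
definition is_tensor_product ::
  "('u::real_inner \<Rightarrow> 'v::real_inner \<Rightarrow> 't::real_inner) \<Rightarrow> bool" where
  "is_tensor_product tp \<longleftrightarrow>
     (\<forall>f1 f2 g1 g2. inner (tp f1 g1) (tp f2 g2) = inner f1 f2 * inner g1 g2) \<and>
     (\<forall>f. linear (\<lambda>g. tp f g)) \<and> (\<forall>g. linear (\<lambda>f. tp f g)) \<and>
     closure (span (range (\<lambda>(f, g). tp f g))) = UNIV"

definition orth_compl :: "'a::real_inner set \<Rightarrow> 'a set" where
  "orth_compl A = {x. \<forall>a\<in>A. inner x a = 0}"

definition L2_PY :: "'w measure \<Rightarrow> 'y measure \<Rightarrow> ('w \<Rightarrow> 'y) \<Rightarrow> ('y \<Rightarrow> real) set" where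
  "L2_PY M N Y = {u. u \<in> borel_measurable N \<and> integrable (distr M N Y) (\<lambda>y. (u y)\<^sup>2)}"

definition cp_loss ::
  "'w measure \<Rightarrow> 'y measure \<Rightarrow> ('w \<Rightarrow> 'y) \<Rightarrow> ('y \<Rightarrow> 't::real_inner)
   \<Rightarrow> ('u \<Rightarrow> 'v \<Rightarrow> 't) \<Rightarrow> 'u \<Rightarrow> 'v \<Rightarrow> real" where
  "cp_loss M N Y s tp f g =
     (INF u \<in> L2_PY M N Y. \<integral>w. (norm (s (Y w) - u (Y w) *\<^sub>R tp f g))\<^sup>2 \<partial>M)"

text \<open>M(f,g) = E <f, T_{s(Y)} g>^2, where <f, T_rho g> = <fg, rho> by definition of T_rho.\<close>
definition cp_M ::
  "'w measure \<Rightarrow> ('w \<Rightarrow> 'y) \<Rightarrow> ('y \<Rightarrow> 't::real_inner)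
   \<Rightarrow> ('u \<Rightarrow> 'v \<Rightarrow> 't) \<Rightarrow> 'u \<Rightarrow> 'v \<Rightarrow> real" where
  "cp_M M Y s tp f g = (\<integral>w. (inner (tp f g) (s (Y w)))\<^sup>2 \<partial>M)"

definition cp_min_step ::
  "'w measure \<Rightarrow> 'y measure \<Rightarrow> ('w \<Rightarrow> 'y) \<Rightarrow> ('y \<Rightarrow> 't::real_inner)
   \<Rightarrow> ('u::real_inner \<Rightarrow> 'v::real_inner \<Rightarrow> 't) \<Rightarrow> (nat \<Rightarrow> 'u) \<Rightarrow> (nat \<Rightarrow> 'v) \<Rightarrow> nat
   \<Rightarrow> 'u \<Rightarrow> 'v \<Rightarrow> bool" where
  "cp_min_step M N Y s tp fs gs k f g \<longleftrightarrow>
     f \<in> orth_compl (span (fs ` {1..<k})) \<and> g \<in> orth_compl (span (gs ` {1..<k})) \<and>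
     (\<forall>f'\<in>orth_compl (span (fs ` {1..<k})). \<forall>g'\<in>orth_compl (span (gs ` {1..<k})).
        cp_loss M N Y s tp f g \<le> cp_loss M N Y s tp f' g')"

definition cp_max_feasible ::
  "(nat \<Rightarrow> 'u::real_inner) \<Rightarrow> (nat \<Rightarrow> 'v::real_inner) \<Rightarrow> nat \<Rightarrow> 'u \<Rightarrow> 'v \<Rightarrow> bool" where
  "cp_max_feasible fs gs k f g \<longleftrightarrow>
     norm f = 1 \<and> (\<forall>i\<in>{1..<k}. inner f (fs i) = 0) \<and>
     norm g = 1 \<and> (\<forall>i\<in>{1..<k}. inner g (gs i) = 0)"

definition cp_max_step ::
  "'w measure \<Rightarrow> ('w \<Rightarrow> 'y) \<Rightarrow> ('y \<Rightarrow> 't::real_inner)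
   \<Rightarrow> ('u::real_inner \<Rightarrow> 'v::real_inner \<Rightarrow> 't) \<Rightarrow> (nat \<Rightarrow> 'u) \<Rightarrow> (nat \<Rightarrow> 'v) \<Rightarrow> nat
   \<Rightarrow> 'u \<Rightarrow> 'v \<Rightarrow> bool" where
  "cp_max_step M Y s tp fs gs k f g \<longleftrightarrow>
     cp_max_feasible fs gs k f g \<and>
     (\<forall>f' g'. cp_max_feasible fs gs k f' g' \<longrightarrow> cp_M M Y s tp f' g' \<le> cp_M M Y s tp f g)"

end

theory Submission
  imports Defs
begin

text \<open>For a fixed direction \<open>t\<close>, the best approximation of a vector \<open>x\<close> by a multiple of \<open>t\<close>
is its orthogonal projection, with squared residual \<open>\<parallel>x\<parallel>\<^sup>2 - \<langle>sgn t, x\<rangle>\<^sup>2\<close>. Taking the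
projection coefficient of \<open>s(Y)\<close> pointwise gives a square integrable \<open>u\<close> attaining the infimum
that defines \<open>L(f, g)\<close>; since \<open>sgn (fg) = sgn f sgn g\<close>, this yields
\<open>L(f, g) = E\<parallel>s(Y)\<parallel>\<^sup>2 - M(sgn f, sgn g)\<close>. Hence minimising \<open>L\<close> over the orthogonal complements
is maximising \<open>M\<close> over their unit vectors: pairs with \<open>f = 0\<close> or \<open>g = 0\<close> only contribute the
value \<open>M = 0\<close>, which never exceeds the nonnegative maximum.\<close>

lemma norm_diff_scaleR_sq:
  fixes x t :: "'a::real_inner"
  shows "(norm (x - c *\<^sub>R t))\<^sup>2 = (norm x)\<^sup>2 - 2 * c * inner t x + c\<^sup>2 * (norm t)\<^sup>2"
  unfolding power2_norm_eq_inner
  by (simp add: inner_diff_left inner_diff_right inner_commute algebra_simps power2_eq_square)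

lemma norm_diff_sq_le:
  fixes a b :: "'a::real_normed_vector"
  shows "(norm (a - b))\<^sup>2 \<le> 2 * (norm a)\<^sup>2 + 2 * (norm b)\<^sup>2"
proof -
  have "(norm (a - b))\<^sup>2 \<le> (norm a + norm b)\<^sup>2"
    by (simp add: norm_triangle_ineq4 power_mono)
  also have "\<dots> \<le> 2 * (norm a)\<^sup>2 + 2 * (norm b)\<^sup>2"
    using sum_squares_ge_zero[of "norm a - norm b" 0] by (simp add: power2_eq_square algebra_simps)
  finally show ?thesis .
qed

lemma inner_sgn_sq:
  fixes t x :: "'a::real_inner"
  shows "(inner (sgn t) x)\<^sup>2 = (inner t x)\<^sup>2 / (norm t)\<^sup>2"
  by (simp add: sgn_div_norm power_mult_distrib power_inverse divide_inverse mult.commute)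

lemma norm_diff_proj_sq:
  fixes x t :: "'a::real_inner"
  shows "(norm (x - (inner t x / (norm t)\<^sup>2) *\<^sub>R t))\<^sup>2 = (norm x)\<^sup>2 - (inner (sgn t) x)\<^sup>2"
proof (cases "t = 0")
  case False
  then show ?thesis
    unfolding norm_diff_scaleR_sq inner_sgn_sq by (simp add: field_simps power2_eq_square)
qed simp

lemma norm_diff_proj_sq_le:
  fixes x t :: "'a::real_inner"
  shows "(norm (x - (inner t x / (norm t)\<^sup>2) *\<^sub>R t))\<^sup>2 \<le> (norm (x - c *\<^sub>R t))\<^sup>2"
proof (cases "t = 0")
  case False
  then have "(norm (x - c *\<^sub>R t))\<^sup>2 - (norm (x - (inner t x / (norm t)\<^sup>2) *\<^sub>R t))\<^sup>2
      = (c * (norm t)\<^sup>2 - inner t x)\<^sup>2 / (norm t)\<^sup>2"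
    unfolding norm_diff_proj_sq norm_diff_scaleR_sq inner_sgn_sq
    by (simp add: field_simps power2_eq_square)
  also have "\<dots> \<ge> 0" by simp
  finally show ?thesis by simp
qed simp

lemma borel_measurable_inner_left [measurable (raw)]:
  fixes x :: "'w \<Rightarrow> 'a::real_inner"
  assumes "x \<in> borel_measurable M"
  shows "(\<lambda>w. inner a (x w)) \<in> borel_measurable M"
  by (rule borel_measurable_continuous_on[OF _ assms]) (intro continuous_intros)

lemma integrable_inner_sq:
  fixes x :: "'w \<Rightarrow> 'a::real_inner"
  assumes "x \<in> borel_measurable M" and "integrable M (\<lambda>w. (norm (x w))\<^sup>2)"
  shows "integrable M (\<lambda>w. (inner a (x w))\<^sup>2)"
proof (rule Bochner_Integration.integrable_bound)
  show "integrable M (\<lambda>w. (norm a)\<^sup>2 * (norm (x w))\<^sup>2)"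
    using assms(2) by simp
  show "AE w in M. norm ((inner a (x w))\<^sup>2) \<le> norm ((norm a)\<^sup>2 * (norm (x w))\<^sup>2)"
    using Cauchy_Schwarz_ineq[of a] by (simp add: power2_norm_eq_inner)
qed (use assms(1) in measurable)

lemma integrable_norm_diff_scaleR_sq:
  fixes x :: "'w \<Rightarrow> 'a::real_inner"
  assumes "x \<in> borel_measurable M" "integrable M (\<lambda>w. (norm (x w))\<^sup>2)"
    and "u \<in> borel_measurable M" "integrable M (\<lambda>w. (u w)\<^sup>2)"
  shows "integrable M (\<lambda>w. (norm (x w - u w *\<^sub>R t))\<^sup>2)"
proof (rule Bochner_Integration.integrable_bound)
  show "integrable M (\<lambda>w. 2 * (norm (x w))\<^sup>2 + 2 * (norm t)\<^sup>2 * (u w)\<^sup>2)"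
    using assms(2,4) by simp
  show "(\<lambda>w. (norm (x w - u w *\<^sub>R t))\<^sup>2) \<in> borel_measurable M"
    unfolding norm_diff_scaleR_sq using assms(1,3) by measurable
  show "AE w in M. norm ((norm (x w - u w *\<^sub>R t))\<^sup>2)
      \<le> norm (2 * (norm (x w))\<^sup>2 + 2 * (norm t)\<^sup>2 * (u w)\<^sup>2)"
  proof (rule AE_I2)
    fix w
    show "norm ((norm (x w - u w *\<^sub>R t))\<^sup>2) \<le> norm (2 * (norm (x w))\<^sup>2 + 2 * (norm t)\<^sup>2 * (u w)\<^sup>2)"
      using norm_diff_sq_le[of "x w" "u w *\<^sub>R t"] by (simp add: power_mult_distrib algebra_simps)
  qed
qed

lemma L2_PY_iff:
  assumes "Y \<in> measurable M N"
  shows "u \<in> L2_PY M N Y \<longleftrightarrow> u \<in> borel_measurable N \<and> integrable M (\<lambda>w. (u (Y w))\<^sup>2)"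
  unfolding L2_PY_def using integrable_distr_eq[OF assms, of "\<lambda>y. (u y)\<^sup>2"] by auto

lemma INF_L2_PY_norm_diff_scaleR_sq:
  fixes s :: "'y \<Rightarrow> 'a::real_inner"
  assumes Y: "Y \<in> measurable M N" and s: "s \<in> borel_measurable N"
    and sY: "integrable M (\<lambda>w. (norm (s (Y w)))\<^sup>2)"
  shows "(INF u\<in>L2_PY M N Y. \<integral>w. (norm (s (Y w) - u (Y w) *\<^sub>R t))\<^sup>2 \<partial>M)
       = (\<integral>w. (norm (s (Y w)))\<^sup>2 \<partial>M) - (\<integral>w. (inner (sgn t) (s (Y w)))\<^sup>2 \<partial>M)"
proof -
  define J where "J u = (\<integral>w. (norm (s (Y w) - u (Y w) *\<^sub>R t))\<^sup>2 \<partial>M)" for u :: "'y \<Rightarrow> real"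
  define c where "c y = inner t (s y) / (norm t)\<^sup>2" for y
  have sY_meas: "(\<lambda>w. s (Y w)) \<in> borel_measurable M"
    using s Y by measurable
  have "c \<in> borel_measurable N"
    unfolding c_def using s by measurable
  moreover have "integrable M (\<lambda>w. (inner t (s (Y w)))\<^sup>2 / ((norm t)\<^sup>2)\<^sup>2)"
    using integrable_inner_sq[OF sY_meas sY] by simp
  ultimately have c_L2: "c \<in> L2_PY M N Y"
    unfolding L2_PY_iff[OF Y] c_def power_divide by simp
  have J_integrable: "integrable M (\<lambda>w. (norm (s (Y w) - u (Y w) *\<^sub>R t))\<^sup>2)"
    if "u \<in> L2_PY M N Y" for u
    using that sY_meas sY Y by (intro integrable_norm_diff_scaleR_sq) (auto simp: L2_PY_iff)
  have "(INF u\<in>L2_PY M N Y. J u) = J c"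
  proof (rule cInf_eq_minimum)
    show "J c \<le> v" if "v \<in> J ` L2_PY M N Y" for v
      using that J_integrable[OF c_L2] J_integrable unfolding J_def c_def
      by (auto intro!: integral_mono norm_diff_proj_sq_le)
  qed (use c_L2 in auto)
  also have "J c = (\<integral>w. (norm (s (Y w)))\<^sup>2 - (inner (sgn t) (s (Y w)))\<^sup>2 \<partial>M)"
    unfolding J_def c_def norm_diff_proj_sq ..
  also have "\<dots> = (\<integral>w. (norm (s (Y w)))\<^sup>2 \<partial>M) - (\<integral>w. (inner (sgn t) (s (Y w)))\<^sup>2 \<partial>M)"
    using sY integrable_inner_sq[OF sY_meas sY] by (rule Bochner_Integration.integral_diff)
  finally show ?thesis
    unfolding J_def .
qed

lemma tensor_product_zero:
  assumes "is_tensor_product tp"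
  shows "tp 0 g = 0" and "tp f 0 = 0"
  using assms linear_0 unfolding is_tensor_product_def by blast+

lemma tensor_product_norm:
  assumes "is_tensor_product tp"
  shows "norm (tp f g) = norm f * norm g"
proof -
  have "(norm (tp f g))\<^sup>2 = (norm f * norm g)\<^sup>2"
    using assms unfolding is_tensor_product_def power2_norm_eq_inner power_mult_distrib by simp
  then show ?thesis
    by (simp add: power2_eq_iff_nonneg)
qed

lemma tensor_product_scaleR:
  assumes "is_tensor_product tp"
  shows "tp (a *\<^sub>R f) (b *\<^sub>R g) = (a * b) *\<^sub>R tp f g"
proof -
  from assms have left: "linear (\<lambda>f. tp f (b *\<^sub>R g))" and right: "linear (\<lambda>g. tp f g)"
    unfolding is_tensor_product_def by auto
  have "tp (a *\<^sub>R f) (b *\<^sub>R g) = a *\<^sub>R tp f (b *\<^sub>R g)"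
    using linear_cmul[OF left] by simp
  also have "\<dots> = (a * b) *\<^sub>R tp f g"
    using linear_cmul[OF right] by simp
  finally show ?thesis .
qed

lemma tensor_product_sgn:
  assumes "is_tensor_product tp"
  shows "tp (sgn f) (sgn g) = sgn (tp f g)"
  unfolding sgn_div_norm divide_inverse_commute tensor_product_scaleR[OF assms]
    tensor_product_norm[OF assms]
  by (simp add: mult.commute)

lemma cp_loss_eq:
  assumes "Y \<in> measurable M N" "s \<in> borel_measurable N"
    and "integrable M (\<lambda>w. (norm (s (Y w)))\<^sup>2)" and "is_tensor_product tp"
  shows "cp_loss M N Y s tp f g = (\<integral>w. (norm (s (Y w)))\<^sup>2 \<partial>M) - cp_M M Y s tp (sgn f) (sgn g)"
  unfolding cp_loss_def cp_M_def tensor_product_sgn[OF assms(4)]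
  using assms(1-3) by (rule INF_L2_PY_norm_diff_scaleR_sq)

lemma cp_M_nonneg: "0 \<le> cp_M M Y s tp f g"
  unfolding cp_M_def by simp

lemma cp_M_zero:
  assumes "is_tensor_product tp"
  shows "cp_M M Y s tp 0 g = 0" and "cp_M M Y s tp f 0 = 0"
  unfolding cp_M_def tensor_product_zero[OF assms] by simp_all

lemma orth_compl_span_iff: "x \<in> orth_compl (span S) \<longleftrightarrow> (\<forall>a\<in>S. inner x a = 0)"
  unfolding orth_compl_def mem_Collect_eq
proof
  assume "\<forall>a\<in>S. inner x a = 0"
  then have "orthogonal x a" if "a \<in> span S" for a
    using that by (rule_tac orthogonal_to_span) (auto simp: orthogonal_def)
  then show "\<forall>a\<in>span S. inner x a = 0"
    by (simp add: orthogonal_def)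
qed (auto intro: span_base)

lemma orth_compl_span_image_iff:
  "x \<in> orth_compl (span (h ` I)) \<longleftrightarrow> (\<forall>i\<in>I. inner x (h i) = 0)"
  unfolding orth_compl_span_iff by blast

lemma sgn_image_orth_compl_subset: "sgn ` orth_compl A \<subseteq> orth_compl A"
  unfolding orth_compl_def by (auto simp: sgn_div_norm)

lemma bounded_sgn_iff_bounded_unit:
  fixes \<Phi> :: "'a::real_normed_vector \<Rightarrow> 'b::real_normed_vector \<Rightarrow> real"
  assumes "sgn ` A \<subseteq> A" "sgn ` B \<subseteq> B"
    and "\<And>g. \<Phi> 0 g = 0" "\<And>f. \<Phi> f 0 = 0" and "0 \<le> c"
  shows "(\<forall>f\<in>A. \<forall>g\<in>B. \<Phi> (sgn f) (sgn g) \<le> c)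
     \<longleftrightarrow> (\<forall>f\<in>A. \<forall>g\<in>B. norm f = 1 \<longrightarrow> norm g = 1 \<longrightarrow> \<Phi> f g \<le> c)"
proof
  assume "\<forall>f\<in>A. \<forall>g\<in>B. \<Phi> (sgn f) (sgn g) \<le> c"
  moreover have "sgn f = f" if "norm f = 1" for f :: 'a
    using that by (simp add: sgn_div_norm)
  moreover have "sgn g = g" if "norm g = 1" for g :: 'b
    using that by (simp add: sgn_div_norm)
  ultimately show "\<forall>f\<in>A. \<forall>g\<in>B. norm f = 1 \<longrightarrow> norm g = 1 \<longrightarrow> \<Phi> f g \<le> c"
    by metis
next
  assume unit: "\<forall>f\<in>A. \<forall>g\<in>B. norm f = 1 \<longrightarrow> norm g = 1 \<longrightarrow> \<Phi> f g \<le> c"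
  show "\<forall>f\<in>A. \<forall>g\<in>B. \<Phi> (sgn f) (sgn g) \<le> c"
  proof (intro ballI)
    fix f g assume "f \<in> A" "g \<in> B"
    show "\<Phi> (sgn f) (sgn g) \<le> c"
    proof (cases "f = 0 \<or> g = 0")
      case True
      then show ?thesis using assms(3-5) by auto
    next
      case False
      then show ?thesis
        using unit assms(1,2) \<open>f \<in> A\<close> \<open>g \<in> B\<close> by (simp add: norm_sgn image_subset_iff)
    qed
  qed
qed

lemma cp_min_step_iff:
  assumes "Y \<in> measurable M N" "s \<in> borel_measurable N"
    and "integrable M (\<lambda>w. (norm (s (Y w)))\<^sup>2)" and "is_tensor_product tp"
  shows "cp_min_step M N Y s tp fs gs k f g \<longleftrightarrow>
     f \<in> orth_compl (span (fs ` {1..<k})) \<and> g \<in> orth_compl (span (gs ` {1..<k})) \<and>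
     (\<forall>f'\<in>orth_compl (span (fs ` {1..<k})). \<forall>g'\<in>orth_compl (span (gs ` {1..<k})).
        cp_M M Y s tp (sgn f') (sgn g') \<le> cp_M M Y s tp (sgn f) (sgn g))"
  unfolding cp_min_step_def cp_loss_eq[OF assms] by auto

lemma cp_max_step_iff:
  "cp_max_step M Y s tp fs gs k f g \<longleftrightarrow>
     f \<in> orth_compl (span (fs ` {1..<k})) \<and> g \<in> orth_compl (span (gs ` {1..<k})) \<and>
     norm f = 1 \<and> norm g = 1 \<and>
     (\<forall>f'\<in>orth_compl (span (fs ` {1..<k})). \<forall>g'\<in>orth_compl (span (gs ` {1..<k})).
        norm f' = 1 \<longrightarrow> norm g' = 1 \<longrightarrow> cp_M M Y s tp f' g' \<le> cp_M M Y s tp f g)"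
  unfolding cp_max_step_def cp_max_feasible_def by (auto simp: orth_compl_span_image_iff)

theorem proposition3:
  fixes M :: "'w measure" and N :: "'y measure" and Y :: "'w \<Rightarrow> 'y"
    and s :: "'y \<Rightarrow> 't::{real_inner, complete_space}"
    and tp :: "'u::{real_inner, complete_space} \<Rightarrow> 'v::{real_inner, complete_space} \<Rightarrow> 't"
    and fs :: "nat \<Rightarrow> 'u" and gs :: "nat \<Rightarrow> 'v" and k :: nat
  assumes "prob_space M"
    and "Y \<in> measurable M N"
    and "s \<in> borel_measurable N"
    and "integrable M (\<lambda>w. (norm (s (Y w)))\<^sup>2)"
    and "is_tensor_product tp"
    and "1 \<le> k"
  shows "(\<forall>f g. f \<noteq> 0 \<longrightarrow> g \<noteq> 0 \<longrightarrow>
            (cp_min_step M N Y s tp fs gs k f g \<longleftrightarrow>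
               f \<in> orth_compl (span (fs ` {1..<k})) \<and> g \<in> orth_compl (span (gs ` {1..<k})) \<and>
               cp_max_step M Y s tp fs gs k (sgn f) (sgn g)))
       \<and> (\<forall>f g. cp_max_step M Y s tp fs gs k f g \<longrightarrow> cp_min_step M N Y s tp fs gs k f g)"
proof -
  note min_iff = cp_min_step_iff[OF assms(2-5)] and max_iff = cp_max_step_iff
  note bound_iff = bounded_sgn_iff_bounded_unit[where \<Phi> = "cp_M M Y s tp",
      OF sgn_image_orth_compl_subset sgn_image_orth_compl_subset
      cp_M_zero[OF assms(5)] cp_M_nonneg]
  have min_max: "cp_min_step M N Y s tp fs gs k f g \<longleftrightarrow>
      f \<in> orth_compl (span (fs ` {1..<k})) \<and> g \<in> orth_compl (span (gs ` {1..<k})) \<and>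
      cp_max_step M Y s tp fs gs k (sgn f) (sgn g)"
    if "f \<noteq> 0" "g \<noteq> 0" for f g
    unfolding min_iff max_iff bound_iff using that
    by (auto simp: norm_sgn intro: sgn_image_orth_compl_subset[THEN subsetD])
  moreover have "cp_min_step M N Y s tp fs gs k f g" if "cp_max_step M Y s tp fs gs k f g" for f g
  proof -
    from that have "norm f = 1" "norm g = 1"
      unfolding max_iff by auto
    then have "sgn f = f" "sgn g = g" "f \<noteq> 0" "g \<noteq> 0"
      by (auto simp: sgn_div_norm)
    with that show ?thesis
      unfolding min_max[OF \<open>f \<noteq> 0\<close> \<open>g \<noteq> 0\<close>] max_iff by simp
  qed
  ultimately show ?thesis
    by blast
qed

end
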